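(* If $r\ge 2$, then the glued binary tree $GT(r)$ satisfies $\mu(GT(r))=2^r+1$, and the number of $\mu$-sets of $GT(r)$ is $\#\mu(GT(r))=2^{r+1}-2$.
   Context: A perfect binary tree of depth $r\ge1$ is a rooted tree in which every non-leaf vertex has exactly $2$ children and all leaves have depth $r$. The glued binary tree $GT(r)$ is obtained from two copies of the perfect binary tree of depth $r$ by pairwise identifying their leaves (via a fixed isomorphism of the copies). For $S\subseteq V(G)$, two vertices $u,v$ are $S$-visible if there exists a shortest $u,v$-path $P$ with $V(P)\cap S\subseteq\{u,v\}$; $S$ is a mutual-visibility set if every two vertices of $S$ are $S$-visible. A largest mutual-visibility set is a $\mu$-set, and its size is the mutual-visibility number $\mu(G)$. $\#\mu(G)$ denotes the number of $\mu$-sets of $G$. *)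

theory Defs
  imports Main
begin

definition walk :: "'a set \<Rightarrow> ('a \<Rightarrow> 'a \<Rightarrow> bool) \<Rightarrow> 'a list \<Rightarrow> bool" where
  "walk V E p \<longleftrightarrow> p \<noteq> [] \<and> set p \<subseteq> V \<and> (\<forall>i. Suc i < length p \<longrightarrow> E (p ! i) (p ! Suc i))"

text \<open>A shortest u,v-path: a u,v-walk with the minimum number of vertices
  (such a walk is automatically a path).\<close>
definition shortest_path :: "'a set \<Rightarrow> ('a \<Rightarrow> 'a \<Rightarrow> bool) \<Rightarrow> 'a \<Rightarrow> 'a \<Rightarrow> 'a list \<Rightarrow> bool" where
  "shortest_path V E u v p \<longleftrightarrow> walk V E p \<and> hd p = u \<and> last p = v \<and>
     (\<forall>q. walk V E q \<and> hd q = u \<and> last q = v \<longrightarrow> length p \<le> length q)"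

definition S_visible :: "'a set \<Rightarrow> ('a \<Rightarrow> 'a \<Rightarrow> bool) \<Rightarrow> 'a set \<Rightarrow> 'a \<Rightarrow> 'a \<Rightarrow> bool" where
  "S_visible V E S u v \<longleftrightarrow> (\<exists>p. shortest_path V E u v p \<and> set p \<inter> S \<subseteq> {u, v})"

definition mutual_visibility_set :: "'a set \<Rightarrow> ('a \<Rightarrow> 'a \<Rightarrow> bool) \<Rightarrow> 'a set \<Rightarrow> bool" where
  "mutual_visibility_set V E S \<longleftrightarrow> S \<subseteq> V \<and> (\<forall>u\<in>S. \<forall>v\<in>S. S_visible V E S u v)"

definition mu :: "'a set \<Rightarrow> ('a \<Rightarrow> 'a \<Rightarrow> bool) \<Rightarrow> nat" where
  "mu V E = Max {card S | S. mutual_visibility_set V E S}"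

definition mu_sets :: "'a set \<Rightarrow> ('a \<Rightarrow> 'a \<Rightarrow> bool) \<Rightarrow> 'a set set" where
  "mu_sets V E = {S. mutual_visibility_set V E S \<and> card S = mu V E}"

text \<open>Vertices of a perfect binary tree of depth r are binary words of length \<le> r
  (root = [], children of w are w@[b]).  A vertex of GT(r) is a pair (copy, word);
  leaves (words of length r) are shared by both copies and represented with copy False.\<close>

definition canon :: "nat \<Rightarrow> bool \<times> bool list \<Rightarrow> bool \<times> bool list" where
  "canon r x = (if length (snd x) = r then (False, snd x) else x)"

definition GT_V :: "nat \<Rightarrow> (bool \<times> bool list) set" where
  "GT_V r = {(c, w). length w \<le> r \<and> (length w = r \<longrightarrow> c = False)}"

definition GT_E :: "nat \<Rightarrow> bool \<times> bool list \<Rightarrow> bool \<times> bool list \<Rightarrow> bool" where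
  "GT_E r x y \<longleftrightarrow> (\<exists>c w b. length w < r \<and>
      ((x = canon r (c, w) \<and> y = canon r (c, w @ [b])) \<or>
       (y = canon r (c, w) \<and> x = canon r (c, w @ [b]))))"

end

(*
  Vertices of one copy of GT(r) are the binary words of length at most r, and inside a copy
  the graph distance is the tree distance |a| + |b| - 2 |lcp a b|, realised by the tree path
  within that copy. Passing to the other copy costs a detour through a leaf, so a shortest
  path between two inner vertices never changes copy. Hence all leaves together with one
  inner vertex x form a mutual-visibility set: two leaves see each other through the copy
  not containing x, and x sees a leaf through its own copy.

  Conversely let S be a mutual-visibility set, M the set of leaves not in S and T_c the inner
  vertices of S in copy c. An inner vertex w of S blocks any two vertices of its copy lying in
  different components of the tree minus w. If |T_c| >= 2, this pushes at least two leaves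
  per element of T_c out of S, disjointly, so 2 |T_c| <= |M|; if T_0 and T_1 are both nonempty,
  two leaves separated by both must be missing, so |M| >= 2. Thus |T_0| + |T_1| <= |M| + 1,
  with equality only for M = {}, which gives |S| <= 2^r + 1 with equality exactly for the
  2 (2^r - 1) sets consisting of all leaves and one inner vertex.
*)
theory Submission
  imports Defs "HOL-Library.Sublist"
begin

section \<open>Tree distance on binary words\<close>

definition tree_dist :: "'a list \<Rightarrow> 'a list \<Rightarrow> nat" where
  "tree_dist a b = length a + length b - 2 * length (longest_common_prefix a b)"

lemma length_longest_common_prefix_le:
  "length (longest_common_prefix a b) \<le> length a"
  "length (longest_common_prefix a b) \<le> length b"
  by (simp_all add: prefix_length_le longest_common_prefix_prefix1 longest_common_prefix_prefix2)

lemma longest_common_prefix_commute: "longest_common_prefix a b = longest_common_prefix b a"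
  by (induction a b rule: longest_common_prefix.induct) auto

lemma longest_common_prefix_eq_left: "prefix a b \<Longrightarrow> longest_common_prefix a b = a"
  by (simp add: longest_common_prefix_max_prefix longest_common_prefix_prefix1 prefix_order.antisym)

text \<open>The two common prefixes of b with a and with c are comparable, being prefixes of b;
  the shorter one is a common prefix of a and c.\<close>
lemma longest_common_prefix_ultrametric:
  "min (length (longest_common_prefix a b)) (length (longest_common_prefix b c))
     \<le> length (longest_common_prefix a c)"
proof -
  let ?ab = "longest_common_prefix a b" and ?bc = "longest_common_prefix b c"
  have "prefix ?ab b" "prefix ?bc b"
    by (simp_all add: longest_common_prefix_prefix1 longest_common_prefix_prefix2)
  then consider "prefix ?ab ?bc" | "prefix ?bc ?ab" using prefix_same_cases by blast
  then show ?thesis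
  proof cases
    case 1
    then have "prefix ?ab c"
      using longest_common_prefix_prefix2 prefix_order.trans by blast
    then have "prefix ?ab (longest_common_prefix a c)"
      by (simp add: longest_common_prefix_max_prefix longest_common_prefix_prefix1)
    then show ?thesis using prefix_length_le by fastforce
  next
    case 2
    then have "prefix ?bc a"
      using longest_common_prefix_prefix1 prefix_order.trans by blast
    then have "prefix ?bc (longest_common_prefix a c)"
      by (simp add: longest_common_prefix_max_prefix longest_common_prefix_prefix2)
    then show ?thesis using prefix_length_le by fastforce
  qed
qed

lemma tree_dist_self [simp]: "tree_dist a a = 0"
  by (simp add: tree_dist_def longest_common_prefix_eq_left)

lemma tree_dist_commute: "tree_dist a b = tree_dist b a"
  by (simp add: tree_dist_def longest_common_prefix_commute)

lemma tree_dist_prefix: "prefix a b \<Longrightarrow> tree_dist a b = length b - length a"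
  by (simp add: tree_dist_def longest_common_prefix_eq_left)

lemma tree_dist_triangle: "tree_dist a b \<le> tree_dist a c + tree_dist c b"
  using longest_common_prefix_ultrametric[of a c b]
    length_longest_common_prefix_le[of a c] length_longest_common_prefix_le[of c b]
    length_longest_common_prefix_le[of a b]
  by (simp add: tree_dist_def)

lemma tree_dist_detour:
  assumes "length a < length t" "length b < length t"
  shows "tree_dist a b < tree_dist a t + tree_dist t b"
  using assms longest_common_prefix_ultrametric[of a t b]
    length_longest_common_prefix_le[of a t] length_longest_common_prefix_le[of t b]
    length_longest_common_prefix_le[of a b]
  by (simp add: tree_dist_def)

definition tree_adj :: "'a list \<Rightarrow> 'a list \<Rightarrow> bool" where
  "tree_adj a b \<longleftrightarrow> (\<exists>x. b = a @ [x]) \<or> (\<exists>x. a = b @ [x])"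

lemma tree_dist_tree_adj: "tree_adj a b \<Longrightarrow> tree_dist a b = 1"
  unfolding tree_adj_def by (auto simp: tree_dist_prefix tree_dist_commute[of "b @ _"])

lemma tree_walk_dist_le:
  assumes "successively tree_adj ws" "i \<le> j" "j < length ws"
  shows "tree_dist (ws ! i) (ws ! j) \<le> j - i"
  using assms(2,3)
proof (induction j)
  case (Suc j)
  show ?case
  proof (cases "i = Suc j")
    case False
    then have "tree_dist (ws ! i) (ws ! j) \<le> j - i" using Suc by simp
    moreover have "tree_dist (ws ! j) (ws ! Suc j) = 1"
      using successively_nth[OF assms(1)] Suc.prems by (simp add: tree_dist_tree_adj)
    ultimately show ?thesis
      using tree_dist_triangle[of "ws ! i" "ws ! Suc j" "ws ! j"] False Suc.prems by linarith
  qed simp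
qed simp

lemma tree_walk_dist_hd_last:
  assumes "successively tree_adj ws" "ws \<noteq> []"
  shows "tree_dist (hd ws) (last ws) < length ws"
proof -
  have "tree_dist (ws ! 0) (ws ! (length ws - 1)) \<le> length ws - 1"
    using tree_walk_dist_le[OF assms(1), of 0 "length ws - 1"] assms(2) by simp
  moreover have "length ws > 0" using assms(2) by simp
  ultimately have "tree_dist (ws ! 0) (ws ! (length ws - 1)) < length ws" by linarith
  then show ?thesis using assms(2) by (simp add: hd_conv_nth last_conv_nth)
qed

lemma tight_tree_walk_dist:
  assumes "successively tree_adj ws" "length ws = tree_dist (hd ws) (last ws) + 1"
    and "i \<le> j" "j < length ws"
  shows "tree_dist (ws ! i) (ws ! j) = j - i"
proof -
  have "ws \<noteq> []" using assms(2) by auto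
  then have "tree_dist (hd ws) (last ws)
      \<le> tree_dist (ws ! 0) (ws ! i) + tree_dist (ws ! i) (ws ! j)
        + tree_dist (ws ! j) (ws ! (length ws - 1))"
    using tree_dist_triangle[of "hd ws" "last ws" "ws ! i"]
      tree_dist_triangle[of "ws ! i" "last ws" "ws ! j"]
    by (simp add: hd_conv_nth last_conv_nth)
  then show ?thesis
    using assms tree_walk_dist_le[OF assms(1), of 0 i] tree_walk_dist_le[OF assms(1), of i j]
      tree_walk_dist_le[OF assms(1), of j "length ws - 1"]
    by linarith
qed

lemma tree_dist_snoc_left:
  assumes "\<not> prefix (a @ [x]) b"
  shows "tree_dist (a @ [x]) b = tree_dist a b + 1"
proof -
  have "longest_common_prefix a b = longest_common_prefix (a @ [x]) b"
  proof (rule prefix_order.antisym)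
    show "prefix (longest_common_prefix a b) (longest_common_prefix (a @ [x]) b)"
      using longest_common_prefix_prefix1[of a b] longest_common_prefix_prefix2[of a b]
      by (simp add: longest_common_prefix_max_prefix)
    have "longest_common_prefix (a @ [x]) b \<noteq> a @ [x]"
      using assms longest_common_prefix_prefix2[of "a @ [x]" b] by auto
    then show "prefix (longest_common_prefix (a @ [x]) b) (longest_common_prefix a b)"
      using longest_common_prefix_prefix1[of "a @ [x]" b]
      by (simp add: longest_common_prefix_max_prefix longest_common_prefix_prefix2)
  qed
  then show ?thesis
    using length_longest_common_prefix_le[of a b] by (simp add: tree_dist_def)
qed

lemma tree_dist_snoc_right: "prefix a b \<Longrightarrow> tree_dist a (b @ [x]) = tree_dist a b + 1"
  using prefix_length_le[of a b] by (simp add: tree_dist_prefix)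

text \<open>The path in the tree from a up to the longest common prefix of a and b and down to b.\<close>
definition tree_path :: "'a list \<Rightarrow> 'a list \<Rightarrow> 'a list list \<Rightarrow> bool" where
  "tree_path a b ws \<longleftrightarrow> successively tree_adj ws \<and> hd ws = a \<and> last ws = b \<and>
     length ws = tree_dist a b + 1 \<and>
     (\<forall>w\<in>set ws. w = a \<or> w = b \<or> strict_prefix w a \<or> strict_prefix w b)"

lemma tree_path_Cons:
  assumes "tree_path a b ws" "\<not> prefix (a @ [x]) b"
  shows "tree_path (a @ [x]) b ((a @ [x]) # ws)"
proof -
  have "ws \<noteq> []" "tree_adj (a @ [x]) (hd ws)"
    using assms(1) by (auto simp: tree_path_def tree_adj_def)
  moreover have "strict_prefix w (a @ [x])" if "w = a \<or> strict_prefix w a" for w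
    using that by (auto simp: strict_prefix_def)
  ultimately show ?thesis
    using assms by (auto simp: tree_path_def successively_Cons tree_dist_snoc_left)
qed

lemma tree_path_snoc:
  assumes "tree_path a b ws" "prefix a b"
  shows "tree_path a (b @ [x]) (ws @ [b @ [x]])"
proof -
  have "ws \<noteq> []" "tree_adj (last ws) (b @ [x])"
    using assms(1) by (auto simp: tree_path_def tree_adj_def)
  moreover have "strict_prefix w (b @ [x])" if "w = b \<or> strict_prefix w b" for w
    using that by (auto simp: strict_prefix_def)
  ultimately show ?thesis
    using assms by (auto simp: tree_path_def successively_append_iff tree_dist_snoc_right)
qed

lemma tree_path_exists: "\<exists>ws. tree_path a b ws"
proof (induction "length a + length b" arbitrary: a b rule: less_induct)
  case less
  consider "a = b" | "\<not> prefix a b" | "strict_prefix a b"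
    by (auto simp: strict_prefix_def)
  then show ?case
  proof cases
    case 1
    then show ?thesis by (intro exI[of _ "[a]"]) (simp add: tree_path_def)
  next
    case 2
    then obtain a' x where "a = a' @ [x]"
      by (cases a rule: rev_cases) auto
    then show ?thesis
      using less[of a' b] 2 tree_path_Cons by fastforce
  next
    case 3
    then obtain b' x where "b = b' @ [x]" "prefix a b'"
      by (cases b rule: rev_cases) (auto simp: strict_prefix_def)
    then show ?thesis
      using less[of a b'] tree_path_snoc by fastforce
  qed
qed

section \<open>Components of the tree minus a vertex\<close>

text \<open>For u \<noteq> w, branch w u tells which component of the tree with w removed contains u:
  the subtree below w @ [x] for Some x, the part containing the parent of w for None.\<close>
definition branch :: "'a list \<Rightarrow> 'a list \<Rightarrow> 'a option" where
  "branch w u = (if strict_prefix w u then Some (u ! length w) else None)"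

lemma branch_tree_adj:
  assumes "tree_adj u v" "u \<noteq> w" "v \<noteq> w"
  shows "branch w u = branch w v"
proof -
  have snoc: "branch w u = branch w (u @ [x])" if "u \<noteq> w" "u @ [x] \<noteq> w" for u x
  proof (cases "strict_prefix w u")
    case True
    moreover have "strict_prefix w (u @ [x])"
      using True prefix_order.less_le_trans[of w u "u @ [x]"] by simp
    ultimately show ?thesis by (simp add: branch_def nth_append prefix_length_less)
  next
    case False
    then have "\<not> strict_prefix w (u @ [x])"
      using that by (auto simp: strict_prefix_def)
    then show ?thesis using False by (simp add: branch_def)
  qed
  show ?thesis
    using assms snoc unfolding tree_adj_def by metis
qed

lemma tree_walk_passes_branch_point:
  assumes "successively tree_adj ws" "ws \<noteq> []" "branch w (hd ws) \<noteq> branch w (last ws)"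
  shows "w \<in> set ws"
  using assms
proof (induction ws)
  case (Cons u ws)
  show ?case
  proof (cases "ws = [] \<or> u = w")
    case False
    then have "tree_adj u (hd ws)" "successively tree_adj ws"
      using Cons.prems(1) by (auto simp: successively_Cons)
    then have "hd ws = w \<or> branch w u = branch w (hd ws)"
      using branch_tree_adj False by blast
    then show ?thesis
      using Cons.IH \<open>successively tree_adj ws\<close> Cons.prems(3) False by auto
  qed (use Cons.prems(3) in auto)
qed simp

lemma branch_extend:
  assumes "\<not> prefix u w" "prefix u z"
  shows "branch w z = branch w u"
proof (cases "strict_prefix w u")
  case True
  moreover obtain t where "z = u @ t" using assms(2) by (auto elim: prefixE)
  moreover have "strict_prefix w z"
    using True assms(2) by (rule prefix_order.less_le_trans)
  ultimately show ?thesis by (simp add: branch_def nth_append prefix_length_less)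
next
  case False
  then have "\<not> prefix w u" using assms(1) by (auto simp: strict_prefix_def)
  then have "\<not> prefix w z" using assms prefix_same_cases[of w z u] by blast
  then show ?thesis using False by (simp add: branch_def strict_prefix_def)
qed

lemma branch_swap:
  assumes "w \<noteq> v" "branch w z \<noteq> branch w v"
  shows "branch v z = branch v w"
proof (cases "prefix w v")
  case True
  then have "\<not> prefix v w" using assms(1) prefix_order.antisym by blast
  then have "\<not> strict_prefix v z"
    using branch_extend[of v w z] assms(2) by (auto simp: strict_prefix_def)
  moreover have "\<not> strict_prefix v w"
    using True by (auto simp: strict_prefix_def)
  ultimately show ?thesis by (simp add: branch_def)
next
  case False
  then have "prefix w z"
    using assms(2) by (auto simp: branch_def strict_prefix_def split: if_splits)
  with False show ?thesis by (intro branch_extend)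
qed

lemma branch_strict_prefix: "strict_prefix w z \<Longrightarrow> branch w z = Some (z ! length w)"
  by (simp add: branch_def)

lemma branch_snoc: "branch w (w @ [x]) = Some x"
  by (simp add: branch_def strict_prefix_def)

lemma branch_below_snoc: "prefix (w @ [x]) z \<Longrightarrow> branch w z = Some x"
  using branch_extend[of "w @ [x]" w z] by (simp add: branch_snoc)

lemma leaf_below_exists:
  fixes u :: "bool list"
  assumes "length u \<le> r"
  obtains z where "length z = r" "prefix u z"
  using assms by (intro that[of "u @ replicate (r - length u) False"]) auto

lemma leaf_below_avoiding:
  fixes u :: "bool list"
  assumes "length u < r"
  obtains z where "length z = r" "prefix u z" "z \<noteq> e"
proof -
  obtain z0 z1 where z: "length z0 = r" "prefix (u @ [False]) z0"
      "length z1 = r" "prefix (u @ [True]) z1"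
    using assms leaf_below_exists[of "u @ [_]" r] by (metis Suc_leI length_append_singleton)
  then have "z0 \<noteq> z1"
    using branch_below_snoc[of u False z0] branch_below_snoc[of u True z1] by auto
  then show ?thesis
    using that z by (metis append_prefixD)
qed

lemma branch_off_first_letter:
  assumes "w \<noteq> []" "prefix [\<not> hd w] z"
  shows "branch w z = None"
proof -
  have "\<not> prefix [\<not> hd w] w" using assms(1) by (cases w) auto
  then have "branch w z = branch w [\<not> hd w]" using assms(2) by (rule branch_extend)
  also have "\<dots> = None"
    using assms(1) by (cases w) (auto simp: branch_def strict_prefix_def)
  finally show ?thesis .
qed

text \<open>The hypothesis 2 \<le> r is needed for the root w = []: then both leaves may have to
  lie below the same child.\<close>
lemma two_leaves_off_branch:
  fixes w :: "bool list"
  assumes "2 \<le> r" "length w < r"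
  obtains z1 z2 where "z1 \<noteq> z2" "length z1 = r" "length z2 = r"
    "branch w z1 \<noteq> \<beta>" "branch w z2 \<noteq> \<beta>"
proof (cases \<beta>)
  case None
  obtain z1 z2 where z: "length z1 = r" "prefix (w @ [False]) z1"
      "length z2 = r" "prefix (w @ [True]) z2"
    using assms(2) leaf_below_exists[of "w @ [_]" r] by (metis Suc_leI length_append_singleton)
  moreover have "branch w z1 = Some False" "branch w z2 = Some True"
    using z by (simp_all add: branch_below_snoc)
  ultimately show ?thesis
    using that[of z1 z2] None by fastforce
next
  case (Some b)
  obtain z1 where z1: "length z1 = r" "prefix (w @ [\<not> b]) z1"
    using assms(2) leaf_below_exists[of "w @ [\<not> b]" r] by auto
  then have b1: "branch w z1 = Some (\<not> b)" by (simp add: branch_below_snoc)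
  show ?thesis
  proof (cases "w = []")
    case True
    obtain z2 where "length z2 = r" "prefix [\<not> b] z2" "z2 \<noteq> z1"
      using assms(1) leaf_below_avoiding[of "[\<not> b]" r] by auto
    then show ?thesis
      using that z1 b1 Some True branch_below_snoc[of "[]" "\<not> b" z2] by auto
  next
    case False
    obtain z2 where z2: "length z2 = r" "prefix [\<not> hd w] z2"
      using assms(1) leaf_below_exists[of "[\<not> hd w]" r] by auto
    then have "branch w z2 = None" using False by (intro branch_off_first_letter)
    with z1 z2 b1 Some show ?thesis
      using that[of z1 z2] by fastforce
  qed
qed

lemma nested_vertices_separate:
  fixes w w' :: "bool list"
  assumes "strict_prefix w w'" "strict_prefix w' z" "prefix (w @ [\<not> w' ! length w]) z'"
  shows "branch w z \<noteq> branch w z' \<and> branch w' z \<noteq> branch w' z'"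
proof -
  have ww': "branch w w' = Some (w' ! length w)"
    using assms(1) by (rule branch_strict_prefix)
  have "\<not> prefix w' w" using assms(1) by (auto simp: strict_prefix_def)
  then have "branch w z = branch w w'"
    using assms(2) by (intro branch_extend) (auto simp: strict_prefix_def)
  moreover have wz': "branch w z' = Some (\<not> w' ! length w)"
    using assms(3) by (rule branch_below_snoc)
  moreover have "branch w' z' = branch w' w"
    using assms(1) ww' wz' by (intro branch_swap) auto
  then have "branch w' z' = None"
    using assms(1) by (auto simp: branch_def strict_prefix_def)
  moreover have "branch w' z \<noteq> None"
    using assms(2) by (simp add: branch_strict_prefix)
  ultimately show ?thesis using ww' by auto
qed

lemma parallel_vertices_separate:
  assumes "w \<parallel> w'" "strict_prefix w z" "strict_prefix w' z'"
  shows "branch w z \<noteq> branch w z' \<and> branch w' z \<noteq> branch w' z'"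
proof -
  have "branch w z' = branch w w'" "branch w' z = branch w' w"
    using assms by (auto intro: branch_extend simp: strict_prefix_def)
  moreover have "branch w w' = None" "branch w' w = None"
    using assms(1) by (auto simp: branch_def strict_prefix_def)
  ultimately show ?thesis using assms(2,3) by (simp add: branch_strict_prefix)
qed

lemma separating_subtrees:
  fixes w w' :: "bool list"
  assumes "2 \<le> r" "length w < r" "length w' < r"
  obtains u u' where "length u < r" "length u' < r"
    "\<And>z z'. strict_prefix u z \<Longrightarrow> strict_prefix u' z' \<Longrightarrow>
       branch w z \<noteq> branch w z' \<and> branch w' z \<noteq> branch w' z'"
proof (cases rule: prefix_cases[of w w'])
  case 1
  consider "w = w'" "w = []" | "w = w'" "w \<noteq> []" | "strict_prefix w w'"
    using 1 by (auto simp: strict_prefix_def)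
  then show ?thesis
  proof cases
    case 1
    then show ?thesis
      using that[of "[False]" "[True]"] assms(1) branch_below_snoc[of "[]" False]
        branch_below_snoc[of "[]" True] by (auto simp: strict_prefix_def)
  next
    case 2
    then show ?thesis
      using that[of w "[\<not> hd w]"] assms(1,2) branch_off_first_letter[of w]
      by (auto simp: branch_strict_prefix strict_prefix_def)
  next
    case 3
    then show ?thesis
      using that[of w' "w @ [\<not> w' ! length w]"] assms(3) nested_vertices_separate[of w w']
        prefix_length_less[of w w'] by (auto simp: strict_prefix_def)
  qed
next
  case 2
  then show ?thesis
    using that[of "w' @ [\<not> w ! length w']" w] assms(2) nested_vertices_separate[of w' w]
      prefix_length_less[of w' w] by (fastforce simp: strict_prefix_def)
next
  case 3
  then show ?thesis
    using that[of w w'] assms(2,3) parallel_vertices_separate by blast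
qed

text \<open>The subtrees from separating_subtrees have at least two leaves each, so e can be
  avoided in both.\<close>
lemma two_leaves_separated_by_both:
  fixes w w' e :: "bool list"
  assumes "2 \<le> r" "length w < r" "length w' < r"
  obtains z z' where "length z = r" "length z' = r" "z \<noteq> e" "z' \<noteq> e"
    "branch w z \<noteq> branch w z'" "branch w' z \<noteq> branch w' z'"
proof -
  obtain u u' where u: "length u < r" "length u' < r"
    and sep: "\<And>z z'. strict_prefix u z \<Longrightarrow> strict_prefix u' z' \<Longrightarrow>
       branch w z \<noteq> branch w z' \<and> branch w' z \<noteq> branch w' z'"
    using separating_subtrees[OF assms] by blast
  obtain z where z: "length z = r" "prefix u z" "z \<noteq> e"
    using u(1) leaf_below_avoiding by blast
  obtain z' where z': "length z' = r" "prefix u' z'" "z' \<noteq> e"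
    using u(2) leaf_below_avoiding by blast
  have "strict_prefix u z" "strict_prefix u' z'"
    using u z z' by (auto simp: strict_prefix_def)
  then show ?thesis using that z z' sep by blast
qed

section \<open>Shortest paths in the glued tree\<close>

lemma GT_V_iff: "x \<in> GT_V r \<longleftrightarrow> length (snd x) \<le> r \<and> (length (snd x) = r \<longrightarrow> \<not> fst x)"
  by (cases x) (simp add: GT_V_def)

lemma canon_inner [simp]: "length w \<noteq> r \<Longrightarrow> canon r (c, w) = (c, w)"
  by (simp add: canon_def)

lemma canon_leaf [simp]: "length w = r \<Longrightarrow> canon r (c, w) = (False, w)"
  by (simp add: canon_def)

lemma snd_canon [simp]: "snd (canon r x) = snd x"
  by (simp add: canon_def)

lemma canon_in_GT_V: "length w \<le> r \<Longrightarrow> canon r (c, w) \<in> GT_V r"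
  by (simp add: GT_V_iff canon_def)

lemma GT_E_tree_adj: "GT_E r x y \<Longrightarrow> tree_adj (snd x) (snd y)"
  unfolding GT_E_def tree_adj_def by auto

lemma GT_E_same_copy:
  "GT_E r x y \<Longrightarrow> length (snd x) < r \<Longrightarrow> length (snd y) < r \<Longrightarrow> fst x = fst y"
  unfolding GT_E_def canon_def by (auto split: if_splits)

lemma GT_E_canon:
  assumes "tree_adj a b" "length a \<le> r" "length b \<le> r"
  shows "GT_E r (canon r (c, a)) (canon r (c, b))"
  using assms(1) unfolding tree_adj_def
proof (elim disjE exE)
  fix x assume "b = a @ [x]"
  then show ?thesis
    using assms(3) unfolding GT_E_def by (intro exI[of _ c] exI[of _ a] exI[of _ x]) auto
next
  fix x assume "a = b @ [x]"
  then show ?thesis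
    using assms(2) unfolding GT_E_def by (intro exI[of _ c] exI[of _ b] exI[of _ x]) auto
qed

lemma walk_iff_successively: "walk V E p \<longleftrightarrow> p \<noteq> [] \<and> set p \<subseteq> V \<and> successively E p"
  unfolding walk_def successively_conv_nth by blast

lemma GT_walk_tree_walk:
  assumes "walk (GT_V r) (GT_E r) p"
  shows "successively tree_adj (map snd p)"
proof -
  have "successively (GT_E r) p" using assms by (simp add: walk_iff_successively)
  then show ?thesis unfolding successively_map by (rule successively_mono) (rule GT_E_tree_adj)
qed

lemma GT_walk_canon:
  assumes "successively tree_adj ws" "ws \<noteq> []" "\<forall>w\<in>set ws. length w \<le> r"
  shows "walk (GT_V r) (GT_E r) (map (\<lambda>w. canon r (c, w)) ws)"
proof -
  have "successively (\<lambda>a b. GT_E r (canon r (c, a)) (canon r (c, b))) ws"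
    using assms(1) by (rule successively_mono) (intro GT_E_canon, use assms(3) in auto)
  then show ?thesis
    using assms(2,3) canon_in_GT_V by (auto simp: walk_iff_successively successively_map)
qed

lemma GT_walk_length_gt_dist:
  assumes "walk (GT_V r) (GT_E r) p"
  shows "tree_dist (snd (hd p)) (snd (last p)) < length p"
proof -
  have "p \<noteq> []" using assms by (simp add: walk_def)
  then show ?thesis
    using tree_walk_dist_hd_last[OF GT_walk_tree_walk[OF assms]] by (simp add: hd_map last_map)
qed

lemma GT_shortest_path_in_copy:
  assumes "length a \<le> r" "length b \<le> r"
  obtains p where "shortest_path (GT_V r) (GT_E r) (canon r (c, a)) (canon r (c, b)) p"
    "length p = tree_dist a b + 1"
    "\<forall>x\<in>set p. x = canon r (c, a) \<or> x = canon r (c, b) \<or> (fst x = c \<and> length (snd x) < r)"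
proof -
  obtain ws where ws: "successively tree_adj ws" "hd ws = a" "last ws = b"
      "length ws = tree_dist a b + 1"
      and on_path: "\<forall>w\<in>set ws. w = a \<or> w = b \<or> strict_prefix w a \<or> strict_prefix w b"
    using tree_path_exists unfolding tree_path_def by blast
  have short: "length w < r" if "strict_prefix w a \<or> strict_prefix w b" for w
    using that assms prefix_length_less by fastforce
  define p where "p = map (\<lambda>w. canon r (c, w)) ws"
  have ne: "ws \<noteq> []" using ws(4) by auto
  have "walk (GT_V r) (GT_E r) p"
    unfolding p_def using ws(1) ne on_path short assms
    by (intro GT_walk_canon) (auto simp: less_imp_le)
  moreover have "length p \<le> length q"
    if "walk (GT_V r) (GT_E r) q" "hd q = canon r (c, a)" "last q = canon r (c, b)" for q
    using GT_walk_length_gt_dist[OF that(1)] that(2,3) ws(4) by (simp add: p_def)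
  ultimately have "shortest_path (GT_V r) (GT_E r) (canon r (c, a)) (canon r (c, b)) p"
    using ne ws(2,3) by (simp add: shortest_path_def p_def hd_map last_map)
  moreover have "x = canon r (c, a) \<or> x = canon r (c, b) \<or> (fst x = c \<and> length (snd x) < r)"
    if x: "x \<in> set p" for x
  proof -
    obtain w where w: "w \<in> set ws" "x = canon r (c, w)" using x by (auto simp: p_def)
    show ?thesis
      using on_path w short[of w] by (cases "w = a \<or> w = b") auto
  qed
  ultimately show ?thesis using that ws(4) by (simp add: p_def)
qed

lemma GT_shortest_path_length:
  assumes "shortest_path (GT_V r) (GT_E r) (canon r (c, a)) (canon r (c, b)) p"
    "length a \<le> r" "length b \<le> r"
  shows "length p = tree_dist a b + 1"
proof -
  obtain q where "shortest_path (GT_V r) (GT_E r) (canon r (c, a)) (canon r (c, b)) q"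
      and "length q = tree_dist a b + 1"
    using GT_shortest_path_in_copy assms(2,3) by blast
  then have "length p \<le> tree_dist a b + 1"
    using assms(1) unfolding shortest_path_def by auto
  moreover have "tree_dist a b < length p"
    using GT_walk_length_gt_dist[of r p] assms(1) unfolding shortest_path_def by auto
  ultimately show ?thesis by simp
qed

lemma GT_walk_inner_segment_same_copy:
  assumes walk: "walk (GT_V r) (GT_E r) p" and "i \<le> j" "j < length p"
    and "\<forall>k. i \<le> k \<and> k \<le> j \<longrightarrow> length (snd (p ! k)) < r"
  shows "fst (p ! j) = fst (p ! i)"
  using assms(2-4)
proof (induction j)
  case (Suc j)
  show ?case
  proof (cases "i = Suc j")
    case False
    then have "GT_E r (p ! j) (p ! Suc j)"
      using walk Suc.prems(2) by (simp add: walk_def)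
    then show ?thesis
      using Suc False GT_E_same_copy by (metis Suc_lessD le_Suc_eq order_refl)
  qed simp
qed simp

lemma GT_walk_copy_change:
  assumes walk: "walk (GT_V r) (GT_E r) p" and "i \<le> j" "j < length p"
    and "length (snd (p ! i)) < r" "length (snd (p ! j)) < r" "fst (p ! i) \<noteq> fst (p ! j)"
  obtains k where "i < k" "k < j" "length (snd (p ! k)) = r"
proof -
  note leaf_found = that
  have bounded: "length (snd (p ! k)) \<le> r" if "k < length p" for k
  proof -
    have "p ! k \<in> GT_V r" using walk nth_mem[OF that] unfolding walk_def by blast
    then show ?thesis by (simp add: GT_V_iff)
  qed
  show ?thesis
  proof (rule ccontr)
    assume no_leaf: "\<not> thesis"
    have "length (snd (p ! k)) < r" if "i \<le> k" "k \<le> j" for k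
    proof (cases "k = i \<or> k = j")
      case False
      then have "i < k" "k < j" using that by auto
      then show ?thesis
        using no_leaf leaf_found[of k] bounded[of k] assms(3) by force
    qed (use assms(4,5) in auto)
    then show False using GT_walk_inner_segment_same_copy[OF walk assms(2,3)] assms(6) by auto
  qed
qed

text \<open>A detour through a leaf from an inner vertex to an inner vertex of the other copy is
  strictly longer than their tree distance, whereas a shortest path realises tree distances.\<close>
lemma GT_shortest_path_inner_same_copy:
  assumes sp: "shortest_path (GT_V r) (GT_E r) (canon r (c, a)) (canon r (c, b)) p"
    and "length a \<le> r" "length b \<le> r"
    and "x \<in> set p" "y \<in> set p" "length (snd x) < r" "length (snd y) < r"
  shows "fst x = fst y"
proof -
  have walk: "walk (GT_V r) (GT_E r) p" using sp by (simp add: shortest_path_def)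
  then have ne: "p \<noteq> []" by (simp add: walk_def)
  have tree_walk: "successively tree_adj (map snd p)" using walk by (rule GT_walk_tree_walk)
  have "length (map snd p) = tree_dist (hd (map snd p)) (last (map snd p)) + 1"
    using GT_shortest_path_length[OF assms(1-3)] sp ne
    by (simp add: shortest_path_def hd_map last_map)
  note tight = tight_tree_walk_dist[OF tree_walk this]
  have ordered: "fst (p ! i) = fst (p ! j)"
    if ij: "i \<le> j" "j < length p" "length (snd (p ! i)) < r" "length (snd (p ! j)) < r" for i j
  proof (rule ccontr)
    assume "fst (p ! i) \<noteq> fst (p ! j)"
    then obtain k where k: "i < k" "k < j" "length (snd (p ! k)) = r"
      using GT_walk_copy_change[OF walk ij] by blast
    then have "tree_dist (snd (p ! i)) (snd (p ! j))
        < tree_dist (snd (p ! i)) (snd (p ! k)) + tree_dist (snd (p ! k)) (snd (p ! j))"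
      using ij by (intro tree_dist_detour) auto
    also have "\<dots> = j - i"
      using tight[of i k] tight[of k j] k ij by simp
    finally show False
      using tight[of i j] ij by simp
  qed
  obtain i j where ij: "x = p ! i" "y = p ! j" "i < length p" "j < length p"
    using assms(4,5) by (auto simp: in_set_conv_nth)
  consider "i \<le> j" | "j \<le> i" by linarith
  then show ?thesis
  proof cases
    case 1
    then show ?thesis using ordered[of i j] ij assms(6,7) by simp
  next
    case 2
    then show ?thesis using ordered[of j i] ij assms(6,7) by simp
  qed
qed

lemma GT_shortest_path_passes_branch_point:
  assumes "shortest_path (GT_V r) (GT_E r) (canon r (c, a)) (canon r (c, b)) p"
    and "branch w a \<noteq> branch w b"
  obtains x where "x \<in> set p" "snd x = w"
proof -
  have walk: "walk (GT_V r) (GT_E r) p" using assms(1) by (simp add: shortest_path_def)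
  then have "p \<noteq> []" by (simp add: walk_def)
  then have "w \<in> set (map snd p)"
    using assms GT_walk_tree_walk[OF walk]
    by (intro tree_walk_passes_branch_point) (auto simp: shortest_path_def hd_map last_map)
  then show ?thesis using that by auto
qed

lemma inner_vertex_blocks:
  assumes "(c, w) \<in> S" "length w < r" "length a < r" "length b \<le> r"
    and "w \<noteq> a" "w \<noteq> b" "branch w a \<noteq> branch w b"
  shows "\<not> S_visible (GT_V r) (GT_E r) S (c, a) (canon r (c, b))"
proof
  assume "S_visible (GT_V r) (GT_E r) S (c, a) (canon r (c, b))"
  then obtain p where sp: "shortest_path (GT_V r) (GT_E r) (canon r (c, a)) (canon r (c, b)) p"
      and avoids: "set p \<inter> S \<subseteq> {(c, a), canon r (c, b)}"
    using assms(3) by (auto simp: S_visible_def)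
  obtain x where x: "x \<in> set p" "snd x = w"
    using GT_shortest_path_passes_branch_point[OF sp assms(7)] by blast
  have "p \<noteq> []" "hd p = (c, a)"
    using sp assms(3) by (auto simp: shortest_path_def walk_def)
  then have "(c, a) \<in> set p" using hd_in_set by metis
  then have "fst x = fst (c, a)"
    using assms(2,3) x(2) by (intro GT_shortest_path_inner_same_copy[OF sp _ assms(4) x(1)]) auto
  then have "fst x = c" by simp
  then have "x = (c, w)" using x(2) by (cases x) simp
  moreover have "(c, w) \<noteq> canon r (c, b)" using assms(6) by (metis snd_canon snd_conv)
  ultimately show False using avoids x(1) assms(1,5) by blast
qed

lemma inner_vertices_of_both_copies_block:
  assumes "(False, w) \<in> S" "(True, w') \<in> S" "length w < r" "length w' < r"
    and "length z = r" "length z' = r"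
    and "branch w z \<noteq> branch w z'" "branch w' z \<noteq> branch w' z'"
  shows "\<not> S_visible (GT_V r) (GT_E r) S (False, z) (False, z')"
proof
  assume "S_visible (GT_V r) (GT_E r) S (False, z) (False, z')"
  then obtain p
    where sp: "shortest_path (GT_V r) (GT_E r) (canon r (False, z)) (canon r (False, z')) p"
      and avoids: "set p \<inter> S \<subseteq> {(False, z), (False, z')}"
    using assms(5,6) by (auto simp: S_visible_def)
  obtain x where x: "x \<in> set p" "snd x = w"
    using GT_shortest_path_passes_branch_point[OF sp assms(7)] by blast
  obtain y where y: "y \<in> set p" "snd y = w'"
    using GT_shortest_path_passes_branch_point[OF sp assms(8)] by blast
  have "fst x = fst y"
    using GT_shortest_path_inner_same_copy[OF sp _ _ x(1) y(1)] x(2) y(2) assms(3-6) by simp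
  moreover have "x = (fst x, w)" "y = (fst y, w')" using x(2) y(2) by auto
  ultimately have "(False, w) \<in> set p \<or> (True, w') \<in> set p"
    using x(1) y(1) by (cases "fst x") auto
  moreover have "(False, w) \<notin> {(False, z), (False, z')}" "(True, w') \<notin> {(False, z), (False, z')}"
    using assms(3-6) by auto
  ultimately show False using avoids assms(1,2) by blast
qed

lemma S_visible_in_copy:
  assumes "length a \<le> r" "length b \<le> r"
    and "\<forall>x\<in>S. fst x = c \<and> length (snd x) < r \<longrightarrow> x = canon r (c, a) \<or> x = canon r (c, b)"
  shows "S_visible (GT_V r) (GT_E r) S (canon r (c, a)) (canon r (c, b))"
proof -
  obtain p where "shortest_path (GT_V r) (GT_E r) (canon r (c, a)) (canon r (c, b)) p"
      "\<forall>x\<in>set p. x = canon r (c, a) \<or> x = canon r (c, b) \<or> (fst x = c \<and> length (snd x) < r)"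
    using GT_shortest_path_in_copy assms(1,2) by metis
  then show ?thesis using assms(3) unfolding S_visible_def by blast
qed

section \<open>Counting mutual-visibility sets\<close>

lemma finite_words_of_length: "finite {z :: bool list. length z = r}"
  using finite_lists_length_eq[of "UNIV :: bool set" r] by simp

lemma card_words_of_length: "card {z :: bool list. length z = r} = 2 ^ r"
  using card_lists_length_eq[of "UNIV :: bool set" r] by simp

lemma finite_words_shorter: "finite {w :: bool list. length w < r}"
  by (rule finite_subset[OF _ finite_lists_length_le[of "UNIV :: bool set" r]]) auto

lemma card_words_shorter: "card {w :: bool list. length w < r} = 2 ^ r - 1"
proof (induction r)
  case (Suc r)
  have "{w :: bool list. length w < Suc r} = {w. length w < r} \<union> {z. length z = r}"
    by auto
  then have "card {w :: bool list. length w < Suc r} = (2 ^ r - 1) + 2 ^ r"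
    using Suc finite_words_shorter finite_words_of_length card_words_of_length
    by (simp add: card_Un_disjoint disjoint_iff)
  then show ?case by simp
qed simp

definition leaves :: "nat \<Rightarrow> (bool \<times> bool list) set" where
  "leaves r = {(False, z) | z. length z = r}"

definition inner_vertices :: "nat \<Rightarrow> (bool \<times> bool list) set" where
  "inner_vertices r = {x. length (snd x) < r}"

definition inner_words :: "nat \<Rightarrow> (bool \<times> bool list) set \<Rightarrow> bool \<Rightarrow> bool list set" where
  "inner_words r S c = {w. length w < r \<and> (c, w) \<in> S}"

definition missing_leaves :: "nat \<Rightarrow> (bool \<times> bool list) set \<Rightarrow> bool list set" where
  "missing_leaves r S = {z. length z = r \<and> (False, z) \<notin> S}"

lemma GT_V_eq_leaves_Un_inner: "GT_V r = leaves r \<union> inner_vertices r"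
  by (auto simp: GT_V_def leaves_def inner_vertices_def)

lemma leaves_inter_inner: "leaves r \<inter> inner_vertices r = {}"
  by (auto simp: leaves_def inner_vertices_def)

lemma card_leaves: "card (leaves r) = 2 ^ r"
proof -
  have "leaves r = Pair False ` {z. length z = r}" by (auto simp: leaves_def)
  moreover have "inj_on (Pair False) {z :: bool list. length z = r}" by (simp add: inj_on_def)
  ultimately show ?thesis by (simp add: card_image card_words_of_length)
qed

lemma finite_leaves: "finite (leaves r)"
proof -
  have "leaves r = Pair False ` {z. length z = r}" by (auto simp: leaves_def)
  then show ?thesis using finite_words_of_length by simp
qed

lemma card_inner_vertices: "card (inner_vertices r) = 2 * (2 ^ r - 1)"
proof -
  have "inner_vertices r = UNIV \<times> {w. length w < r}" by (auto simp: inner_vertices_def)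
  then show ?thesis by (simp add: card_cartesian_product card_words_shorter)
qed

lemma finite_inner_vertices: "finite (inner_vertices r)"
proof -
  have "inner_vertices r = UNIV \<times> {w. length w < r}" by (auto simp: inner_vertices_def)
  then show ?thesis using finite_words_shorter by simp
qed

lemma finite_inner_words: "finite (inner_words r S c)"
  by (rule finite_subset[OF _ finite_words_shorter[of r]]) (auto simp: inner_words_def)

lemma finite_missing_leaves: "finite (missing_leaves r S)"
  by (rule finite_subset[OF _ finite_words_of_length[of r]]) (auto simp: missing_leaves_def)

lemma card_split_leaves_inner:
  assumes "S \<subseteq> GT_V r"
  shows "card S = card (S \<inter> leaves r) + card (S \<inter> inner_vertices r)"
proof -
  have "S = (S \<inter> leaves r) \<union> (S \<inter> inner_vertices r)"
    using assms by (auto simp: GT_V_eq_leaves_Un_inner)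
  then show ?thesis
    using finite_leaves finite_inner_vertices leaves_inter_inner
    by (metis card_Un_disjoint finite_Int inf_assoc inf_bot_right inf_left_commute)
qed

lemma card_leaves_present_missing:
  "card (S \<inter> leaves r) + card (missing_leaves r S) = 2 ^ r"
proof -
  have "leaves r - S = Pair False ` missing_leaves r S"
    by (auto simp: leaves_def missing_leaves_def)
  then have "card (leaves r - S) = card (missing_leaves r S)"
    by (simp add: card_image inj_on_def)
  then show ?thesis
    using finite_leaves card_leaves by (metis card_Int_Diff inf_commute)
qed

lemma card_inner_part:
  "card (S \<inter> inner_vertices r) = card (inner_words r S False) + card (inner_words r S True)"
proof -
  have "S \<inter> inner_vertices r = Pair False ` inner_words r S False \<union> Pair True ` inner_words r S True"
    by (auto simp: inner_vertices_def inner_words_def image_iff) (metis prod.collapse)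
  then have "card (S \<inter> inner_vertices r)
      = card (Pair False ` inner_words r S False) + card (Pair True ` inner_words r S True)"
    by (simp only:) (rule card_Un_disjoint, auto simp: finite_inner_words)
  then show ?thesis by (simp add: card_image inj_on_def)
qed

lemma inner_words_same_side:
  assumes "mutual_visibility_set (GT_V r) (GT_E r) S"
    and "w \<in> inner_words r S c" "u \<in> inner_words r S c" "v \<in> inner_words r S c"
    and "u \<noteq> w" "v \<noteq> w"
  shows "branch w u = branch w v"
  using assms inner_vertex_blocks[of c w S r u v]
  by (fastforce simp: inner_words_def mutual_visibility_set_def)

lemma leaf_off_side_missing:
  assumes "mutual_visibility_set (GT_V r) (GT_E r) S"
    and "w \<in> inner_words r S c" "u \<in> inner_words r S c" "u \<noteq> w"
    and "length z = r" "branch w z \<noteq> branch w u"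
  shows "z \<in> missing_leaves r S"
proof -
  have "z \<noteq> w" using assms(2,5) by (auto simp: inner_words_def)
  then have "\<not> S_visible (GT_V r) (GT_E r) S (c, u) (canon r (c, z))"
    using assms(2-6) inner_vertex_blocks[of c w S r u z] by (auto simp: inner_words_def)
  then show ?thesis
    using assms(1,3,5) by (auto simp: missing_leaves_def mutual_visibility_set_def inner_words_def)
qed

text \<open>By inner_words_same_side, each w in T = inner_words r S c sees all of T - {w} on one
  side, so the leaves D w on its other sides number at least two; they are missing from S,
  and the sets D w are pairwise disjoint by branch_swap.\<close>
lemma card_inner_words_le_missing_leaves:
  assumes r: "2 \<le> r" and mv: "mutual_visibility_set (GT_V r) (GT_E r) S"
    and two: "2 \<le> card (inner_words r S c)"
  shows "2 * card (inner_words r S c) \<le> card (missing_leaves r S)"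
proof -
  define T where "T = inner_words r S c"
  have other: "\<exists>u\<in>T. u \<noteq> w" for w
  proof (rule ccontr)
    assume "\<not> ?thesis"
    then have "T \<subseteq> {w}" by blast
    then have "card T \<le> card {w}" by (intro card_mono) auto
    then show False using two by (simp add: T_def)
  qed
  define D where "D w = {z. length z = r \<and> (\<forall>u\<in>T - {w}. branch w z \<noteq> branch w u)}" for w
  have D_missing: "D w \<subseteq> missing_leaves r S" if "w \<in> T" for w
    using other[of w] leaf_off_side_missing[OF mv that[unfolded T_def]]
    by (auto simp: D_def T_def)
  have D_disjoint: "D w \<inter> D v = {}" if "w \<in> T" "v \<in> T" "w \<noteq> v" for w v
    using that branch_swap[of w v] by (fastforce simp: D_def)
  have finite_D: "finite (D w)" for w
    by (rule finite_subset[OF _ finite_words_of_length[of r]]) (auto simp: D_def)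
  have card_D: "2 \<le> card (D w)" if w: "w \<in> T" for w
  proof -
    obtain u where u: "u \<in> T" "u \<noteq> w" using other by blast
    have "length w < r" using w by (simp add: T_def inner_words_def)
    then obtain z1 z2 where "z1 \<noteq> z2" "length z1 = r" "length z2 = r"
        "branch w z1 \<noteq> branch w u" "branch w z2 \<noteq> branch w u"
      using two_leaves_off_branch[OF r] by blast
    moreover have "branch w u' = branch w u" if "u' \<in> T - {w}" for u'
      using w u that by (intro inner_words_same_side[OF mv]) (auto simp: T_def)
    ultimately have "{z1, z2} \<subseteq> D w" by (auto simp: D_def)
    then have "card {z1, z2} \<le> card (D w)" by (intro card_mono finite_D)
    then show ?thesis using \<open>z1 \<noteq> z2\<close> by simp
  qed
  have "2 * card T = (\<Sum>w\<in>T. 2)" by simp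
  also have "\<dots> \<le> (\<Sum>w\<in>T. card (D w))" using card_D by (rule sum_mono)
  also have "\<dots> = card (\<Union>w\<in>T. D w)"
    using finite_inner_words finite_D D_disjoint
    by (intro card_UN_disjoint[symmetric]) (auto simp: T_def)
  also have "\<dots> \<le> card (missing_leaves r S)"
    using D_missing finite_missing_leaves by (intro card_mono) auto
  finally show ?thesis by (simp add: T_def)
qed

lemma two_le_card_missing_leaves:
  assumes r: "2 \<le> r" and mv: "mutual_visibility_set (GT_V r) (GT_E r) S"
    and "w \<in> inner_words r S False" "w' \<in> inner_words r S True"
  shows "2 \<le> card (missing_leaves r S)"
proof (rule ccontr)
  assume "\<not> ?thesis"
  then have "card (missing_leaves r S) \<le> Suc 0" by simp
  then have "\<forall>a\<in>missing_leaves r S. \<forall>b\<in>missing_leaves r S. a = b"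
    using card_le_Suc0_iff_eq[OF finite_missing_leaves] by blast
  then obtain e where e: "missing_leaves r S \<subseteq> {e}"
    by (cases "missing_leaves r S = {}") blast+
  have w: "length w < r" "(False, w) \<in> S" "length w' < r" "(True, w') \<in> S"
    using assms(3,4) by (simp_all add: inner_words_def)
  obtain z z' where z: "length z = r" "length z' = r" "z \<noteq> e" "z' \<noteq> e"
      "branch w z \<noteq> branch w z'" "branch w' z \<noteq> branch w' z'"
    using two_leaves_separated_by_both[OF r w(1) w(3)] by blast
  then have "(False, z) \<in> S" "(False, z') \<in> S"
    using e by (auto simp: missing_leaves_def)
  moreover have "\<not> S_visible (GT_V r) (GT_E r) S (False, z) (False, z')"
    using inner_vertices_of_both_copies_block[OF w(2,4,1,3) z(1,2,5,6)] .
  ultimately show False using mv by (simp add: mutual_visibility_set_def)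
qed

lemma card_inner_words_sum_le:
  assumes "2 \<le> r" "mutual_visibility_set (GT_V r) (GT_E r) S"
  shows "card (inner_words r S False) + card (inner_words r S True) \<le> card (missing_leaves r S) + 1"
    and "card (inner_words r S False) + card (inner_words r S True) = card (missing_leaves r S) + 1
      \<Longrightarrow> missing_leaves r S = {}"
proof -
  let ?k = "card (inner_words r S False) + card (inner_words r S True)"
  let ?m = "card (missing_leaves r S)"
  have one_copy: "2 \<le> card (inner_words r S c) \<longrightarrow>
      2 * card (inner_words r S c) \<le> card (missing_leaves r S)" for c
    using card_inner_words_le_missing_leaves[OF assms] by blast
  note one_copy[of False] one_copy[of True]
  moreover have "1 \<le> card (inner_words r S False) \<and> 1 \<le> card (inner_words r S True)
      \<longrightarrow> 2 \<le> card (missing_leaves r S)"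
    using two_le_card_missing_leaves[OF assms] by fastforce
  ultimately have "?k \<le> ?m + 1 \<and> (?k = ?m + 1 \<longrightarrow> ?m = 0)"
    by presburger
  then show "?k \<le> ?m + 1" and "?k = ?m + 1 \<Longrightarrow> missing_leaves r S = {}"
    using finite_missing_leaves by auto
qed

lemma mutual_visibility_set_card_le:
  assumes "2 \<le> r" "mutual_visibility_set (GT_V r) (GT_E r) S"
  shows "card S \<le> 2 ^ r + 1"
proof -
  have "S \<subseteq> GT_V r" using assms(2) by (simp add: mutual_visibility_set_def)
  then have "card S = card (S \<inter> leaves r) + card (S \<inter> inner_vertices r)"
    by (rule card_split_leaves_inner)
  then show ?thesis
    using card_leaves_present_missing[of S r] card_inner_part[of S r]
      card_inner_words_sum_le(1)[OF assms]
    by linarith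
qed

lemma mutual_visibility_set_card_eq:
  assumes "2 \<le> r" "mutual_visibility_set (GT_V r) (GT_E r) S" "card S = 2 ^ r + 1"
  obtains x where "x \<in> inner_vertices r" "S = leaves r \<union> {x}"
proof -
  have S: "S \<subseteq> GT_V r" using assms(2) by (simp add: mutual_visibility_set_def)
  have sum: "card (S \<inter> leaves r) + card (S \<inter> inner_vertices r) = 2 ^ r + 1"
    using card_split_leaves_inner[OF S] assms(3) by simp
  have "card (S \<inter> inner_vertices r) \<le> card (missing_leaves r S) + 1"
    using card_inner_words_sum_le(1)[OF assms(1,2)] by (simp add: card_inner_part)
  then have eq: "card (S \<inter> inner_vertices r) = card (missing_leaves r S) + 1"
    using sum card_leaves_present_missing[of S r] by linarith
  then have "missing_leaves r S = {}"
    using card_inner_words_sum_le(2)[OF assms(1,2)] by (simp add: card_inner_part)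
  then have "S \<inter> leaves r = leaves r" by (auto simp: missing_leaves_def leaves_def)
  moreover have "card (S \<inter> inner_vertices r) = 1"
    using eq \<open>missing_leaves r S = {}\<close> by simp
  then obtain x where x: "S \<inter> inner_vertices r = {x}" by (rule card_1_singletonE)
  moreover have "S = (S \<inter> leaves r) \<union> (S \<inter> inner_vertices r)"
    using S by (auto simp: GT_V_eq_leaves_Un_inner)
  ultimately have "S = leaves r \<union> {x}" by simp
  moreover have "x \<in> inner_vertices r" using x by blast
  ultimately show ?thesis using that by blast
qed

lemma mutual_visibility_set_leaves_Un_inner:
  assumes "x \<in> inner_vertices r"
  shows "mutual_visibility_set (GT_V r) (GT_E r) (leaves r \<union> {x})"
proof -
  obtain c w where x: "x = (c, w)" "length w < r"
    using assms by (cases x) (auto simp: inner_vertices_def)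
  let ?S = "leaves r \<union> {x}"
  have canon: "y = canon r (c', snd y)" "length (snd y) \<le> r"
    if "y \<in> ?S" "y \<noteq> x \<or> c' = c" for y c'
    using that x by (auto simp: leaves_def)
  have inner_in_S: "y = x" if "y \<in> ?S" "length (snd y) < r" for y
    using that by (auto simp: leaves_def)
  have "S_visible (GT_V r) (GT_E r) ?S u v" if "u \<in> ?S" "v \<in> ?S" for u v
  proof (cases "u = x \<or> v = x")
    case True
    then show ?thesis
      using S_visible_in_copy[of "snd u" r "snd v" ?S c] canon[OF that(1)] canon[OF that(2)]
        inner_in_S by (metis (no_types, lifting))
  next
    case False
    then show ?thesis
      using S_visible_in_copy[of "snd u" r "snd v" ?S "\<not> c"] canon[OF that(1)] canon[OF that(2)]
        inner_in_S x(1) by (metis (no_types, lifting) fst_conv)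
  qed
  moreover have "?S \<subseteq> GT_V r"
    using x by (auto simp: GT_V_eq_leaves_Un_inner inner_vertices_def)
  ultimately show ?thesis by (simp add: mutual_visibility_set_def)
qed

lemma inner_vertex_not_leaf: "x \<in> inner_vertices r \<Longrightarrow> x \<notin> leaves r"
  using leaves_inter_inner by blast

lemma card_leaves_insert_inner:
  assumes "x \<in> inner_vertices r"
  shows "card (leaves r \<union> {x}) = 2 ^ r + 1"
proof -
  have "x \<notin> leaves r" using assms by (rule inner_vertex_not_leaf)
  then show ?thesis using finite_leaves card_leaves by simp
qed

lemma mu_GT:
  assumes "2 \<le> r"
  shows "mu (GT_V r) (GT_E r) = 2 ^ r + 1"
proof -
  define C where "C = {card S | S. mutual_visibility_set (GT_V r) (GT_E r) S}"
  have bound: "n \<le> 2 ^ r + 1" if "n \<in> C" for n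
    using that mutual_visibility_set_card_le[OF assms] by (auto simp: C_def)
  then have "finite C" by (meson finite_nat_set_iff_bounded_le)
  have root: "(False, []) \<in> inner_vertices r" using assms by (simp add: inner_vertices_def)
  have "2 ^ r + 1 \<in> C"
    using mutual_visibility_set_leaves_Un_inner[OF root] card_leaves_insert_inner[OF root]
    unfolding C_def by (intro CollectI exI[of _ "leaves r \<union> {(False, [])}"]) simp
  then show ?thesis
    unfolding mu_def C_def[symmetric] using \<open>finite C\<close> bound by (intro Max_eqI)
qed

lemma mu_sets_GT:
  assumes "2 \<le> r"
  shows "mu_sets (GT_V r) (GT_E r) = (\<lambda>x. leaves r \<union> {x}) ` inner_vertices r"
proof
  show "mu_sets (GT_V r) (GT_E r) \<subseteq> (\<lambda>x. leaves r \<union> {x}) ` inner_vertices r"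
  proof
    fix S assume "S \<in> mu_sets (GT_V r) (GT_E r)"
    then have "mutual_visibility_set (GT_V r) (GT_E r) S" "card S = 2 ^ r + 1"
      by (simp_all add: mu_sets_def mu_GT[OF assms])
    then obtain x where "x \<in> inner_vertices r" "S = leaves r \<union> {x}"
      using mutual_visibility_set_card_eq[OF assms] by blast
    then show "S \<in> (\<lambda>x. leaves r \<union> {x}) ` inner_vertices r" by blast
  qed
  show "(\<lambda>x. leaves r \<union> {x}) ` inner_vertices r \<subseteq> mu_sets (GT_V r) (GT_E r)"
    using mutual_visibility_set_leaves_Un_inner card_leaves_insert_inner
    by (auto simp: mu_sets_def mu_GT[OF assms])
qed

theorem mainTheorem3:
  fixes r :: nat
  assumes "r \<ge> 2"
  shows "mu (GT_V r) (GT_E r) = 2 ^ r + 1 \<and> card (mu_sets (GT_V r) (GT_E r)) = 2 ^ (r + 1) - 2"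
proof
  show "mu (GT_V r) (GT_E r) = 2 ^ r + 1" using assms by (rule mu_GT)
  have "inj_on (\<lambda>x. leaves r \<union> {x}) (inner_vertices r)"
  proof (rule inj_onI)
    fix x y assume "x \<in> inner_vertices r" "leaves r \<union> {x} = leaves r \<union> {y}"
    then show "x = y" using inner_vertex_not_leaf[of x r] by blast
  qed
  then have "card (mu_sets (GT_V r) (GT_E r)) = card (inner_vertices r)"
    by (simp add: mu_sets_GT[OF assms] card_image)
  also have "\<dots> = 2 ^ (r + 1) - 2"
    by (simp add: card_inner_vertices diff_mult_distrib2)
  finally show "card (mu_sets (GT_V r) (GT_E r)) = 2 ^ (r + 1) - 2" .
qed

end
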